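(* Let $t>0$ and $\beta>1$. Then the function $h\mapsto\tilde l(t,\beta,h)$ is strictly convex and monotone decreasing on $(0,1]$, and \[ \tilde l_h(t,\beta,h)=\sqrt{1-\tilde\sigma^2(t,\beta,h)}+\tilde\sigma(t,\beta,h)-\sqrt2 . \]
   Context: For $t\ge 0$ let $q(t)=\lfloor t+1\rfloor/2$ if $\lfloor t\rfloor$ is odd and $q(t)=t-\lfloor t\rfloor/2$ if $\lfloor t\rfloor$ is even. For $0<h\le1$ let $p(t,h)=t+h-q(t)$. For $\beta>1$ let $\tilde\sigma(t,\beta,h)\in(0,1)$ be the unique solution $\sigma$ of $\frac{p(t,h)\sigma}{\sqrt{1-\sigma^2}}+\frac{q(t)\sigma}{\sqrt{\beta^2-\sigma^2}}=h$, and \[ \tilde l(t,\beta,h)=\frac{p(t,h)}{\sqrt{1-\tilde\sigma^2}}+\frac{\beta^2q(t)}{\sqrt{\beta^2-\tilde\sigma^2}}-t-h\sqrt2,\qquad\tilde\sigma=\tilde\sigma(t,\beta,h); \] $\tilde l_h$ denotes the partial derivative with respect to $h$. *)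

theory Defs
  imports "HOL-Analysis.Analysis"
begin

definition qfun :: "real \<Rightarrow> real" where
  "qfun t = (if odd \<lfloor>t\<rfloor> then real_of_int \<lfloor>t + 1\<rfloor> / 2
             else t - real_of_int \<lfloor>t\<rfloor> / 2)"

definition pfun :: "real \<Rightarrow> real \<Rightarrow> real" where
  "pfun t h = t + h - qfun t"

definition sigma_tilde :: "real \<Rightarrow> real \<Rightarrow> real \<Rightarrow> real" where
  "sigma_tilde t \<beta> h = (THE \<sigma>. 0 < \<sigma> \<and> \<sigma> < 1 \<and>
      pfun t h * \<sigma> / sqrt (1 - \<sigma>\<^sup>2) + qfun t * \<sigma> / sqrt (\<beta>\<^sup>2 - \<sigma>\<^sup>2) = h)"

definition l_tilde :: "real \<Rightarrow> real \<Rightarrow> real \<Rightarrow> real" where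
  "l_tilde t \<beta> h = (let \<sigma> = sigma_tilde t \<beta> h in
      pfun t h / sqrt (1 - \<sigma>\<^sup>2) + \<beta>\<^sup>2 * qfun t / sqrt (\<beta>\<^sup>2 - \<sigma>\<^sup>2) - t - h * sqrt 2)"

definition strict_convex_on :: "real set \<Rightarrow> (real \<Rightarrow> real) \<Rightarrow> bool" where
  "strict_convex_on S f \<longleftrightarrow> convex S \<and>
    (\<forall>x\<in>S. \<forall>y\<in>S. \<forall>u. x \<noteq> y \<and> 0 < u \<and> u < 1 \<longrightarrow>
       f (u * x + (1 - u) * y) < u * f x + (1 - u) * f y)"

end

theory Submission
  imports Defs
begin

text \<open>For fixed \<open>r \<in> [0,1]\<close> the function
  \<open>psi h r = p(t,h) \<surd>(1 - r\<^sup>2) + q(t) \<surd>(\<beta>\<^sup>2 - r\<^sup>2) + r h - t - h\<surd>2\<close>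
  is affine in \<open>h\<close> (since \<open>p(t,h) = t + h - q(t)\<close>) with slope \<open>\<surd>(1 - r\<^sup>2) + r - \<surd>2 \<le> 0\<close>.
  Cauchy--Schwarz in the plane, together with the equation defining \<open>\<sigma>\<close>, shows
  \<open>psi h r \<le> l(h)\<close> with equality exactly for \<open>r = \<sigma>(h)\<close>.  So \<open>l\<close> is the upper envelope of a
  family of nonincreasing lines, the line with parameter \<open>\<sigma>(z)\<close> supporting \<open>l\<close> at \<open>z\<close> only,
  because \<open>\<sigma>\<close> is injective.  This gives strict convexity and monotonicity, and since \<open>\<sigma>\<close> is
  Lipschitz continuous, the slopes of the supporting lines form the derivative.\<close>

lemma qfun_pos_le:
  assumes "0 < t"
  shows "0 < qfun t" and "qfun t \<le> t"
proof -
  have floor: "0 \<le> real_of_int \<lfloor>t\<rfloor>" "real_of_int \<lfloor>t\<rfloor> \<le> t" using assms by auto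
  have "0 < qfun t \<and> qfun t \<le> t"
  proof (cases "odd \<lfloor>t\<rfloor>")
    case True
    then have "\<lfloor>t\<rfloor> \<noteq> 0" by auto
    then have "1 \<le> real_of_int \<lfloor>t\<rfloor>" using assms by linarith
    moreover have "2 * qfun t = real_of_int \<lfloor>t\<rfloor> + 1" using True by (simp add: qfun_def)
    ultimately show ?thesis using floor by linarith
  next
    case False
    then have "qfun t = t - real_of_int \<lfloor>t\<rfloor> / 2" by (simp add: qfun_def)
    then show ?thesis using floor assms by linarith
  qed
  then show "0 < qfun t" and "qfun t \<le> t" by auto
qed

lemma frac_sqrt_strict_mono:
  fixes x y c :: real
  assumes "0 \<le> x" "x < y" "y\<^sup>2 < c"
  shows "x / sqrt (c - x\<^sup>2) < y / sqrt (c - y\<^sup>2)"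
proof -
  have "x\<^sup>2 \<le> y\<^sup>2" using assms by (simp add: power_mono)
  then have "x\<^sup>2 < c" using assms by linarith
  with \<open>x\<^sup>2 \<le> y\<^sup>2\<close> have "sqrt (c - y\<^sup>2) \<le> sqrt (c - x\<^sup>2)" "0 < sqrt (c - y\<^sup>2)" "0 < sqrt (c - x\<^sup>2)"
    using assms by auto
  then have "x / sqrt (c - x\<^sup>2) \<le> x / sqrt (c - y\<^sup>2)"
    using assms by (intro divide_left_mono mult_pos_pos) auto
  also have "\<dots> < y / sqrt (c - y\<^sup>2)"
    using \<open>0 < sqrt (c - y\<^sup>2)\<close> assms by (intro divide_strict_right_mono) auto
  finally show ?thesis .
qed

lemma frac_sqrt_mono:
  fixes x y c :: real
  assumes "0 \<le> x" "x \<le> y" "y\<^sup>2 < c"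
  shows "x / sqrt (c - x\<^sup>2) \<le> y / sqrt (c - y\<^sup>2)"
  using frac_sqrt_strict_mono[of x y c] assms by (cases "x = y") auto

lemma frac_sqrt_diff_ge:
  fixes x y :: real
  assumes "0 \<le> x" "x \<le> y" "y < 1"
  shows "y - x \<le> y / sqrt (1 - y\<^sup>2) - x / sqrt (1 - x\<^sup>2)"
proof -
  have "x\<^sup>2 \<le> y\<^sup>2" "y\<^sup>2 < 1" using assms by (auto simp: power_mono power_less_one_iff)
  then have "1 \<le> 1 / sqrt (1 - x\<^sup>2)" and "1 / sqrt (1 - x\<^sup>2) \<le> 1 / sqrt (1 - y\<^sup>2)"
    by (auto intro!: divide_left_mono)
  then have "x * (1 / sqrt (1 - x\<^sup>2) - 1) \<le> y * (1 / sqrt (1 - y\<^sup>2) - 1)"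
    using assms by (intro mult_mono) auto
  then show ?thesis by (simp add: algebra_simps)
qed

lemma cauchy_schwarz_equal_norms:
  fixes X x r s B :: real
  assumes "X\<^sup>2 + r\<^sup>2 = B" "x\<^sup>2 + s\<^sup>2 = B"
  shows "X * x + r * s \<le> B" and "r \<noteq> s \<Longrightarrow> X * x + r * s < B"
proof -
  have X: "2 * (X * x) \<le> X\<^sup>2 + x\<^sup>2" using sum_squares_bound[of X x] by linarith
  show "X * x + r * s \<le> B" using X sum_squares_bound[of r s] assms by linarith
  assume "r \<noteq> s"
  then have "0 < (r - s)\<^sup>2" by simp
  then show "X * x + r * s < B" using X assms by (simp add: power2_diff)
qed

lemma sqrt_one_minus_square_add_le:
  fixes r :: real
  assumes "r\<^sup>2 \<le> 1"
  shows "sqrt (1 - r\<^sup>2) + r \<le> sqrt 2"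
proof -
  have "(sqrt (1 - r\<^sup>2))\<^sup>2 + r\<^sup>2 = 1" using assms by simp
  then have "sqrt (1 - r\<^sup>2) * r + r * sqrt (1 - r\<^sup>2) \<le> 1"
    by (intro cauchy_schwarz_equal_norms(1)) (simp_all add: add.commute)
  then have "(sqrt (1 - r\<^sup>2) + r)\<^sup>2 \<le> 2" using assms by (simp add: power2_sum mult_ac)
  then show ?thesis by (simp add: real_le_rsqrt)
qed

lemma strict_convex_on_if_strict_supporting_lines:
  fixes f g :: "real \<Rightarrow> real"
  assumes "convex S"
    and support: "\<And>x z. x \<in> S \<Longrightarrow> z \<in> S \<Longrightarrow> x \<noteq> z \<Longrightarrow> f z + (x - z) * g z < f x"
  shows "strict_convex_on S f"
  unfolding strict_convex_on_def
proof (intro conjI ballI allI impI)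
  fix x y u :: real assume xy: "x \<in> S" "y \<in> S" and u: "x \<noteq> y \<and> 0 < u \<and> u < 1"
  define z where "z = u * x + (1 - u) * y"
  have "z \<in> S" using convexD[OF \<open>convex S\<close> xy, of u "1 - u"] u unfolding z_def by auto
  have "z - x = (1 - u) * (y - x)" "z - y = u * (x - y)" unfolding z_def by algebra+
  then have "z \<noteq> x" "z \<noteq> y" using u by auto
  have "f z = u * (f z + (x - z) * g z) + (1 - u) * (f z + (y - z) * g z)"
    unfolding z_def by algebra
  also have "\<dots> < u * f x + (1 - u) * f y"
    using support[OF xy(1) \<open>z \<in> S\<close> \<open>z \<noteq> x\<close>[symmetric]]
      support[OF xy(2) \<open>z \<in> S\<close> \<open>z \<noteq> y\<close>[symmetric]] u
    by (intro add_strict_mono mult_strict_left_mono) auto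
  finally show "f (u * x + (1 - u) * y) < u * f x + (1 - u) * f y" unfolding z_def .
qed (fact \<open>convex S\<close>)

lemma antimono_on_if_supporting_lines:
  fixes f g :: "real \<Rightarrow> real"
  assumes support: "\<And>x z. x \<in> S \<Longrightarrow> z \<in> S \<Longrightarrow> f z + (x - z) * g z \<le> f x"
    and nonpos: "\<And>z. z \<in> S \<Longrightarrow> g z \<le> 0"
  shows "antimono_on S f"
proof (rule monotone_onI)
  fix x y assume "x \<in> S" "y \<in> S" "x \<le> y"
  then have "0 \<le> (x - y) * g y" by (intro mult_nonpos_nonpos nonpos) auto
  then show "f y \<le> f x" using support[OF \<open>x \<in> S\<close> \<open>y \<in> S\<close>] by linarith
qed

text \<open>The supporting lines at \<open>x\<close> and at \<open>y\<close> squeeze the difference quotient between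
  \<open>g x\<close> and \<open>g y\<close>.\<close>
lemma has_real_derivative_if_supporting_lines:
  fixes f g :: "real \<Rightarrow> real"
  assumes support: "\<And>x z. x \<in> S \<Longrightarrow> z \<in> S \<Longrightarrow> f z + (x - z) * g z \<le> f x"
    and "x \<in> S" and g_cont: "(g \<longlongrightarrow> g x) (at x within S)"
  shows "(f has_real_derivative g x) (at x within S)"
  unfolding has_field_derivative_iff
proof (rule LIM_zero_cancel, rule Lim_null_comparison)
  show "\<forall>\<^sub>F y in at x within S. norm ((f y - f x) / (y - x) - g x) \<le> \<bar>g y - g x\<bar>"
    unfolding eventually_at_filter
  proof (rule always_eventually, intro allI impI)
    fix y assume "y \<noteq> x" "y \<in> S"
    have "0 \<le> f y - f x - (y - x) * g x" "f y - f x - (y - x) * g x \<le> (y - x) * (g y - g x)"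
      using support[OF \<open>y \<in> S\<close> \<open>x \<in> S\<close>] support[OF \<open>x \<in> S\<close> \<open>y \<in> S\<close>] by (auto simp: algebra_simps)
    then have "\<bar>f y - f x - (y - x) * g x\<bar> \<le> \<bar>y - x\<bar> * \<bar>g y - g x\<bar>"
      by (simp add: abs_mult[symmetric])
    then show "norm ((f y - f x) / (y - x) - g x) \<le> \<bar>g y - g x\<bar>"
      using \<open>y \<noteq> x\<close> by (simp add: field_simps)
  qed
  show "((\<lambda>y. \<bar>g y - g x\<bar>) \<longlongrightarrow> 0) (at x within S)"
    using g_cont by (intro tendsto_rabs_zero LIM_zero)
qed

context
  fixes t \<beta> :: real
  assumes t_pos: "0 < t" and beta_gt_1: "1 < \<beta>"
begin

abbreviation "sig h \<equiv> sigma_tilde t \<beta> h"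
abbreviation "sigma_lhs h s \<equiv> pfun t h * s / sqrt (1 - s\<^sup>2) + qfun t * s / sqrt (\<beta>\<^sup>2 - s\<^sup>2)"
abbreviation "slope r \<equiv> sqrt (1 - r\<^sup>2) + r - sqrt 2"

abbreviation "psi h r \<equiv>
  pfun t h * sqrt (1 - r\<^sup>2) + qfun t * sqrt (\<beta>\<^sup>2 - r\<^sup>2) + r * h - t - h * sqrt 2"

lemma qfun_pos: "0 < qfun t"
  using qfun_pos_le t_pos by blast

lemma pfun_ge: "h \<le> pfun t h"
  using qfun_pos_le(2)[OF t_pos] by (simp add: pfun_def)

lemma one_less_beta_sq: "1 < \<beta>\<^sup>2"
  using less_1_mult[OF beta_gt_1 beta_gt_1] by (simp add: power2_eq_square)

lemma sq_less_one_beta_sq: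
  assumes "0 \<le> s" "s < 1"
  shows "s\<^sup>2 < 1" and "s\<^sup>2 < \<beta>\<^sup>2"
proof -
  show "s\<^sup>2 < 1" using assms by (simp add: power_less_one_iff)
  then show "s\<^sup>2 < \<beta>\<^sup>2" using one_less_beta_sq by linarith
qed

lemma sigma_lhs_strict_mono:
  assumes "0 < h" "0 \<le> x" "x < y" "y < 1"
  shows "sigma_lhs h x < sigma_lhs h y"
proof -
  have y: "y\<^sup>2 < 1" "y\<^sup>2 < \<beta>\<^sup>2" using assms sq_less_one_beta_sq by auto
  have "0 < pfun t h" using pfun_ge[of h] assms by linarith
  then have "pfun t h * (x / sqrt (1 - x\<^sup>2)) < pfun t h * (y / sqrt (1 - y\<^sup>2))"
    using frac_sqrt_strict_mono[of x y 1] assms y by (intro mult_strict_left_mono) auto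
  moreover have "qfun t * (x / sqrt (\<beta>\<^sup>2 - x\<^sup>2)) \<le> qfun t * (y / sqrt (\<beta>\<^sup>2 - y\<^sup>2))"
    using frac_sqrt_mono[of x y "\<beta>\<^sup>2"] assms y qfun_pos by (intro mult_left_mono) auto
  ultimately show ?thesis by simp
qed

lemma sigma_equation_ex1:
  assumes "0 < h" "h \<le> 1"
  shows "\<exists>!\<sigma>. 0 < \<sigma> \<and> \<sigma> < 1 \<and> sigma_lhs h \<sigma> = h"
proof -
  \<comment> \<open>At \<open>r\<close> the first summand alone is \<open>pfun t h \<ge> h\<close>.\<close>
  define r where "r = sqrt (1/2 :: real)"
  have r: "0 < r" "r < 1" "sqrt (1 - r\<^sup>2) = r" unfolding r_def by auto
  have "0 < qfun t * r / sqrt (\<beta>\<^sup>2 - r\<^sup>2)" using qfun_pos r sq_less_one_beta_sq[of r] by simp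
  then have upper: "h \<le> sigma_lhs h r" using r pfun_ge[of h] by simp
  have lower: "sigma_lhs h 0 \<le> h" using assms by simp
  have "isCont (sigma_lhs h) x" if "0 \<le> x" "x \<le> r" for x
  proof -
    have "x\<^sup>2 < 1" "x\<^sup>2 < \<beta>\<^sup>2" using that r sq_less_one_beta_sq by auto
    then show ?thesis by (intro continuous_intros) auto
  qed
  then obtain \<sigma> where \<sigma>: "0 \<le> \<sigma>" "\<sigma> \<le> r" "sigma_lhs h \<sigma> = h"
    using IVT[of "sigma_lhs h" 0 h r, OF lower upper] r by auto
  then have "0 < \<sigma> \<and> \<sigma> < 1 \<and> sigma_lhs h \<sigma> = h" using r assms by (cases "\<sigma> = 0") auto
  then show ?thesis
    using sigma_lhs_strict_mono[OF \<open>0 < h\<close>] by (metis less_le_not_le linorder_cases)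
qed

lemma sig_solves:
  assumes "0 < h" "h \<le> 1"
  shows "0 < sig h" "sig h < 1" "sigma_lhs h (sig h) = h"
  using theI'[OF sigma_equation_ex1[OF assms]] unfolding sigma_tilde_def by auto

lemma sig_frac_less_one:
  assumes "0 < h" "h \<le> 1"
  shows "sig h / sqrt (1 - (sig h)\<^sup>2) < 1"
proof -
  let ?s = "sig h"
  have s: "0 < ?s" "?s < 1" "sigma_lhs h ?s = h" using sig_solves assms by auto
  then have "0 < qfun t * ?s / sqrt (\<beta>\<^sup>2 - ?s\<^sup>2)" using qfun_pos sq_less_one_beta_sq by simp
  then have "pfun t h * (?s / sqrt (1 - ?s\<^sup>2)) < pfun t h * 1" using s pfun_ge[of h] by simp
  moreover have "0 < pfun t h" using pfun_ge[of h] assms by linarith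
  ultimately show ?thesis by (simp only: mult_less_cancel_left_pos)
qed

lemma sig_inj:
  assumes "0 < h" "h \<le> 1" "0 < h'" "h' \<le> 1" "sig h = sig h'"
  shows "h = h'"
proof -
  let ?u = "sig h / sqrt (1 - (sig h)\<^sup>2)"
  have "sigma_lhs h (sig h) = h" "sigma_lhs h' (sig h) = h'"
    using sig_solves(3)[of h] sig_solves(3)[of h'] assms by auto
  then have "h' - h = sigma_lhs h' (sig h) - sigma_lhs h (sig h)" by simp
  also have "\<dots> = (h' - h) * ?u" by (simp add: pfun_def diff_divide_distrib[symmetric] algebra_simps)
  finally have "(h' - h) * (1 - ?u) = 0" by (simp add: algebra_simps)
  moreover have "1 - ?u \<noteq> 0" using sig_frac_less_one[OF assms(1,2)] by linarith
  ultimately show ?thesis by (metis mult_eq_0_iff right_minus_eq)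
qed

lemma sig_lipschitz:
  assumes "0 < h" "h \<le> 1" "0 < h'" "h' \<le> 1"
  shows "h * \<bar>sig h' - sig h\<bar> \<le> \<bar>h' - h\<bar>"
proof -
  define u where "u x = x / sqrt (1 - x\<^sup>2)" for x :: real
  define v where "v x = x / sqrt (\<beta>\<^sup>2 - x\<^sup>2)" for x :: real
  define s where "s = sig h"
  define s' where "s' = sig h'"
  define p where "p = pfun t h"
  have s: "0 < s" "s < 1" "0 < s'" "s' < 1" using sig_solves assms unfolding s_def s'_def by auto
  have incr: "y - x \<le> u y - u x \<and> 0 \<le> v y - v x" if "0 \<le> x" "x \<le> y" "y < 1" for x y
    using that frac_sqrt_diff_ge[of x y] frac_sqrt_mono[of x y "\<beta>\<^sup>2"] sq_less_one_beta_sq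
    unfolding u_def v_def by auto
  \<comment> \<open>\<open>K\<close> is the difference of the two defining equations; it is at least \<open>h \<bar>s' - s\<bar>\<close>
    in absolute value because \<open>u x - x\<close> and \<open>v\<close> are nondecreasing.\<close>
  define K where "K = p * (u s' - u s) + qfun t * (v s' - v s)"
  have "p * u s + qfun t * v s = h" "(p + (h' - h)) * u s' + qfun t * v s' = h'"
    using sig_solves(3) assms unfolding u_def v_def s_def s'_def p_def pfun_def by (simp_all add: algebra_simps)
  then have "K = (h' - h) * (1 - u s')" unfolding K_def by (simp add: algebra_simps)
  moreover have "0 \<le> u s'" "u s' < 1"
    using s sig_frac_less_one[OF assms(3,4)] sq_less_one_beta_sq(1)[of s'] unfolding u_def s'_def
    by (auto intro!: divide_nonneg_nonneg)
  ultimately have K_le: "\<bar>K\<bar> \<le> \<bar>h' - h\<bar>" by (simp add: abs_mult mult_left_le)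
  have "h \<le> p" unfolding p_def by (rule pfun_ge)
  have "h * \<bar>s' - s\<bar> \<le> \<bar>K\<bar>"
  proof (cases "s \<le> s'")
    case True
    then have "h * (s' - s) \<le> p * (u s' - u s)" "0 \<le> qfun t * (v s' - v s)"
      using incr[of s s'] s \<open>h \<le> p\<close> assms qfun_pos by (auto intro!: mult_mono)
    then show ?thesis using True unfolding K_def by linarith
  next
    case False
    then have "h * (s - s') \<le> p * (u s - u s')" "0 \<le> qfun t * (v s - v s')"
      using incr[of s' s] s \<open>h \<le> p\<close> assms qfun_pos by (auto intro!: mult_mono)
    then show ?thesis using False unfolding K_def by (simp add: algebra_simps)
  qed
  with K_le show ?thesis unfolding s_def s'_def by linarith
qed

lemma sig_continuous:
  assumes "0 < h" "h \<le> 1"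
  shows "(sig \<longlongrightarrow> sig h) (at h within {0<..1})"
proof (rule LIM_zero_cancel, rule Lim_null_comparison)
  show "\<forall>\<^sub>F y in at h within {0<..1}. norm (sig y - sig h) \<le> \<bar>y - h\<bar> / h"
    unfolding eventually_at_filter
  proof (rule always_eventually, intro allI impI)
    fix y :: real assume "y \<noteq> h" "y \<in> {0<..1}"
    then have "h * \<bar>sig y - sig h\<bar> \<le> \<bar>y - h\<bar>" using sig_lipschitz[of h y] assms by auto
    then show "norm (sig y - sig h) \<le> \<bar>y - h\<bar> / h" using assms by (simp add: le_divide_eq mult.commute)
  qed
  show "((\<lambda>y. \<bar>y - h\<bar> / h) \<longlongrightarrow> 0) (at h within {0<..1})"
    by (intro tendsto_divide_zero tendsto_rabs_zero LIM_zero tendsto_ident_at)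
qed

lemma l_tilde_minus_psi:
  assumes "0 < h" "h \<le> 1"
  shows "l_tilde t \<beta> h - psi h r =
      pfun t h * (1 - sqrt (1 - r\<^sup>2) * sqrt (1 - (sig h)\<^sup>2) - r * sig h) / sqrt (1 - (sig h)\<^sup>2)
    + qfun t * (\<beta>\<^sup>2 - sqrt (\<beta>\<^sup>2 - r\<^sup>2) * sqrt (\<beta>\<^sup>2 - (sig h)\<^sup>2) - r * sig h) / sqrt (\<beta>\<^sup>2 - (sig h)\<^sup>2)"
proof -
  let ?s = "sig h"
  have s: "0 < ?s" "?s < 1" "sigma_lhs h ?s = h" using sig_solves assms by auto
  then have "0 < sqrt (1 - ?s\<^sup>2)" "0 < sqrt (\<beta>\<^sup>2 - ?s\<^sup>2)" using sq_less_one_beta_sq by auto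
  moreover have "psi h r = psi h r - r * h + r * sigma_lhs h ?s" using s by simp
  ultimately show ?thesis by (simp add: l_tilde_def Let_def field_simps)
qed

lemma psi_le_l_tilde:
  assumes "0 < h" "h \<le> 1" "r\<^sup>2 \<le> 1"
  shows "psi h r \<le> l_tilde t \<beta> h" and "r \<noteq> sig h \<Longrightarrow> psi h r < l_tilde t \<beta> h"
proof -
  let ?s = "sig h"
  have "0 < ?s" "?s < 1" using sig_solves assms by auto
  then have s: "?s\<^sup>2 < 1" "?s\<^sup>2 < \<beta>\<^sup>2" using sq_less_one_beta_sq by auto
  have r: "r\<^sup>2 < \<beta>\<^sup>2" using assms one_less_beta_sq by linarith
  have "0 < pfun t h" using pfun_ge[of h] assms by linarith
  have cs_1: "sqrt (1 - r\<^sup>2) * sqrt (1 - ?s\<^sup>2) + r * ?s \<le> 1"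
    and cs_\<beta>: "sqrt (\<beta>\<^sup>2 - r\<^sup>2) * sqrt (\<beta>\<^sup>2 - ?s\<^sup>2) + r * ?s \<le> \<beta>\<^sup>2"
    using assms s r by (auto intro!: cauchy_schwarz_equal_norms(1))
  then have q_term: "0 \<le> qfun t * (\<beta>\<^sup>2 - sqrt (\<beta>\<^sup>2 - r\<^sup>2) * sqrt (\<beta>\<^sup>2 - ?s\<^sup>2) - r * ?s) / sqrt (\<beta>\<^sup>2 - ?s\<^sup>2)"
    using qfun_pos s by simp
  moreover have "0 \<le> pfun t h * (1 - sqrt (1 - r\<^sup>2) * sqrt (1 - ?s\<^sup>2) - r * ?s) / sqrt (1 - ?s\<^sup>2)"
    using cs_1 \<open>0 < pfun t h\<close> s by simp
  ultimately show "psi h r \<le> l_tilde t \<beta> h" using l_tilde_minus_psi[OF assms(1,2), of r] by linarith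
  assume "r \<noteq> ?s"
  then have "sqrt (1 - r\<^sup>2) * sqrt (1 - ?s\<^sup>2) + r * ?s < 1"
    using assms s by (auto intro!: cauchy_schwarz_equal_norms(2))
  then have "0 < pfun t h * (1 - sqrt (1 - r\<^sup>2) * sqrt (1 - ?s\<^sup>2) - r * ?s) / sqrt (1 - ?s\<^sup>2)"
    using \<open>0 < pfun t h\<close> s by simp
  with q_term show "psi h r < l_tilde t \<beta> h"
    using l_tilde_minus_psi[OF assms(1,2), of r] by linarith
qed

lemma psi_sig_eq_l_tilde:
  assumes "0 < h" "h \<le> 1"
  shows "psi h (sig h) = l_tilde t \<beta> h"
proof -
  let ?s = "sig h"
  have "0 < ?s" "?s < 1" using sig_solves assms by auto
  then have "?s\<^sup>2 < 1" "?s\<^sup>2 < \<beta>\<^sup>2" using sq_less_one_beta_sq by auto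
  then have "sqrt (1 - ?s\<^sup>2) * sqrt (1 - ?s\<^sup>2) = 1 - ?s\<^sup>2"
    "sqrt (\<beta>\<^sup>2 - ?s\<^sup>2) * sqrt (\<beta>\<^sup>2 - ?s\<^sup>2) = \<beta>\<^sup>2 - ?s\<^sup>2"
    by simp_all
  then show ?thesis using l_tilde_minus_psi[OF assms, of ?s] by (simp add: power2_eq_square)
qed

lemma psi_affine: "psi h' r = psi h r + (h' - h) * slope r"
  by (simp add: pfun_def algebra_simps)

lemma l_tilde_supporting_line:
  assumes "x \<in> {0<..1}" "z \<in> {0<..1}"
  shows "l_tilde t \<beta> z + (x - z) * slope (sig z) \<le> l_tilde t \<beta> x"
    and "x \<noteq> z \<Longrightarrow> l_tilde t \<beta> z + (x - z) * slope (sig z) < l_tilde t \<beta> x"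
proof -
  have "0 < sig z" "sig z < 1" using sig_solves assms by auto
  then have r: "(sig z)\<^sup>2 \<le> 1" by (simp add: power_le_one)
  have "l_tilde t \<beta> z + (x - z) * slope (sig z) = psi x (sig z)"
    using psi_sig_eq_l_tilde[of z] psi_affine[of x "sig z" z] assms by simp
  moreover have "sig z \<noteq> sig x" if "x \<noteq> z" using sig_inj[of x z] that assms by auto
  ultimately show "l_tilde t \<beta> z + (x - z) * slope (sig z) \<le> l_tilde t \<beta> x"
    and "x \<noteq> z \<Longrightarrow> l_tilde t \<beta> z + (x - z) * slope (sig z) < l_tilde t \<beta> x"
    using psi_le_l_tilde[of x "sig z", OF _ _ r] assms by auto
qed

end

theorem lemma3p17:
  fixes t \<beta> :: real
  assumes "t > 0" and "\<beta> > 1"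
  shows "strict_convex_on {0<..1} (\<lambda>h. l_tilde t \<beta> h)
       \<and> antimono_on {0<..1} (\<lambda>h. l_tilde t \<beta> h)
       \<and> (\<forall>h\<in>{0<..1}. ((\<lambda>h. l_tilde t \<beta> h) has_real_derivative
             (sqrt (1 - (sigma_tilde t \<beta> h)\<^sup>2) + sigma_tilde t \<beta> h - sqrt 2))
             (at h within {0<..1}))"
proof (intro conjI ballI)
  let ?g = "\<lambda>h. sqrt (1 - (sigma_tilde t \<beta> h)\<^sup>2) + sigma_tilde t \<beta> h - sqrt 2"
  note support = l_tilde_supporting_line[OF assms]
  show "strict_convex_on {0<..1} (\<lambda>h. l_tilde t \<beta> h)"
    by (rule strict_convex_on_if_strict_supporting_lines[where g = ?g]) (auto intro: support)
  have "?g h \<le> 0" if "h \<in> {0<..1}" for h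
    using sig_solves[OF assms, of h] that sqrt_one_minus_square_add_le by (simp add: power_le_one)
  then show "antimono_on {0<..1} (\<lambda>h. l_tilde t \<beta> h)"
    by (intro antimono_on_if_supporting_lines[where g = ?g] support(1))
  fix h :: real assume h: "h \<in> {0<..1}"
  have "(?g \<longlongrightarrow> ?g h) (at h within {0<..1})"
    using h by (intro tendsto_intros sig_continuous[OF assms]) auto
  with support(1) h show "((\<lambda>h. l_tilde t \<beta> h) has_real_derivative ?g h) (at h within {0<..1})"
    by (rule has_real_derivative_if_supporting_lines)
qed

end
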